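(* Let $V$ be a Hausdorff topological vector space over $\mathbb{R}$ whose topology is weak, and let $A\subseteq V\setminus\{0\}$. The following are equivalent: (i) $A$ is topologically linearly independent; (ii) $A$ is topologically independent; (iii) $A$ is absolutely Cauchy summable and minimal; (iv) the map $\mathbb{Z}^{(A)}\to\langle A\rangle$, $(z_a)_{a\in A}\mapsto\sum_{a\in A}z_a a$, is an isomorphism of topological groups; (v) the map $\mathbb{R}^{(A)}\to\langle A\rangle_{\mathbb{R}}$, $(r_a)_{a\in A}\mapsto\sum_{a\in A}r_a a$, is an isomorphism of topological vector spaces.
   Context: The topology of a topological vector space $X$ is weak if it coincides with the coarsest topology making all continuous linear functionals on $X$ continuous. $\langle A\rangle$ is the additive subgroup and $\langle A\rangle_{\mathbb{R}}$ the linear span generated by $A$, both with the subspace topology. $\mathbb{Z}^{(A)}$ (resp. $\mathbb{R}^{(A)}$) is the set of finitely supported functions $A\to\mathbb{Z}$ (resp. $A\to\mathbb{R}$) with the topology induced from the product topology of $\mathbb{Z}^A$ ($\mathbb{Z}$ discrete) resp. $\mathbb{R}^A$. A subset $A\subseteq V\setminus\{0\}$ is topologically linearly independent if for every neighborhood $W$ of $0$ there is a neighborhood $U$ of $0$ such that for every finite $F\subseteq A$ and reals $\{r_a: a\in F\}$, $\sum_{a\in F}r_a a\in U$ implies $r_a a\in W$ for all $a\in F$; it is topologically independent if the same holds with integers $z_a$ in place of reals. $A$ is minimal if $a\notin\overline{\langle A\setminus\{a\}\rangle_{\mathbb{R}}}$ for every $a\in A$. $A$ is absolutely Cauchy summable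 if for every neighborhood $V_0$ of $0$ there is a finite $F\subseteq A$ with $\langle A\setminus F\rangle\subseteq V_0$. *)

theory Defs
  imports "HOL-Analysis.Analysis"
begin

definition tvs_ops_continuous :: "'a::{real_vector,topological_space} itself \<Rightarrow> bool" where
  "tvs_ops_continuous _ \<longleftrightarrow>
     continuous_on UNIV (\<lambda>p::'a \<times> 'a. fst p + snd p) \<and>
     continuous_on UNIV (\<lambda>p::real \<times> 'a. fst p *\<^sub>R snd p)"

definition cont_lin_functional :: "('a::{real_vector,topological_space} \<Rightarrow> real) \<Rightarrow> bool" where
  "cont_lin_functional f \<longleftrightarrow> linear f \<and> continuous_on UNIV f"

definition weak_topology_tvs :: "'a::{real_vector,topological_space} itself \<Rightarrow> bool" where
  "weak_topology_tvs _ \<longleftrightarrow>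
     (euclidean :: 'a topology) =
       topology_generated_by {f -` U | f U. cont_lin_functional (f::'a \<Rightarrow> real) \<and> open U}"

definition nbhd0 :: "'a::{real_vector,topological_space} set \<Rightarrow> bool" where
  "nbhd0 W \<longleftrightarrow> (\<exists>U. open U \<and> 0 \<in> U \<and> U \<subseteq> W)"

definition int_span :: "'a::real_vector set \<Rightarrow> 'a set" where
  "int_span A = {(\<Sum>a\<in>F. of_int (z a) *\<^sub>R a) | F z. finite F \<and> F \<subseteq> A}"

definition top_lin_indep :: "'a::{real_vector,topological_space} set \<Rightarrow> bool" where
  "top_lin_indep A \<longleftrightarrow>
     (\<forall>W. nbhd0 W \<longrightarrow> (\<exists>U. nbhd0 U \<and>
        (\<forall>F (r::'a \<Rightarrow> real). finite F \<and> F \<subseteq> A \<and> (\<Sum>a\<in>F. r a *\<^sub>R a) \<in> U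
            \<longrightarrow> (\<forall>a\<in>F. r a *\<^sub>R a \<in> W))))"

definition top_indep :: "'a::{real_vector,topological_space} set \<Rightarrow> bool" where
  "top_indep A \<longleftrightarrow>
     (\<forall>W. nbhd0 W \<longrightarrow> (\<exists>U. nbhd0 U \<and>
        (\<forall>F (z::'a \<Rightarrow> int). finite F \<and> F \<subseteq> A \<and> (\<Sum>a\<in>F. of_int (z a) *\<^sub>R a) \<in> U
            \<longrightarrow> (\<forall>a\<in>F. of_int (z a) *\<^sub>R a \<in> W))))"

definition minimal_set :: "'a::{real_vector,topological_space} set \<Rightarrow> bool" where
  "minimal_set A \<longleftrightarrow> (\<forall>a\<in>A. a \<notin> closure (span (A - {a})))"

definition abs_cauchy_summable :: "'a::{real_vector,topological_space} set \<Rightarrow> bool" where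
  "abs_cauchy_summable A \<longleftrightarrow>
     (\<forall>V0. nbhd0 V0 \<longrightarrow> (\<exists>F. finite F \<and> F \<subseteq> A \<and> int_span (A - F) \<subseteq> V0))"

text \<open>Finitely supported functions A \<rightarrow> Z (resp. A \<rightarrow> R), represented as functions on the
whole type vanishing outside A, with the topology induced by the product topology of
Z^A (Z discrete) resp. R^A.  Coordinates outside A carry the one-point space {0}, so the
full product is homeomorphic to Z^A resp. R^A.\<close>
definition fin_supp :: "'a set \<Rightarrow> ('a \<Rightarrow> 'b::zero) set" where
  "fin_supp A = {f. (\<forall>a. a \<notin> A \<longrightarrow> f a = 0) \<and> finite {a. f a \<noteq> 0}}"

definition Z_fin_top :: "'a set \<Rightarrow> ('a \<Rightarrow> int) topology" where
  "Z_fin_top A = subtopology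
     (product_topology (\<lambda>a. if a \<in> A then discrete_topology UNIV else discrete_topology {0}) UNIV)
     (fin_supp A)"

definition R_fin_top :: "'a set \<Rightarrow> ('a \<Rightarrow> real) topology" where
  "R_fin_top A = subtopology
     (product_topology (\<lambda>a. if a \<in> A then euclideanreal else subtopology euclideanreal {0}) UNIV)
     (fin_supp A)"

definition Z_sum_map :: "('a \<Rightarrow> int) \<Rightarrow> 'a::real_vector" where
  "Z_sum_map z = (\<Sum>a\<in>{a. z a \<noteq> 0}. of_int (z a) *\<^sub>R a)"

definition R_sum_map :: "('a \<Rightarrow> real) \<Rightarrow> 'a::real_vector" where
  "R_sum_map r = (\<Sum>a\<in>{a. r a \<noteq> 0}. r a *\<^sub>R a)"

definition Z_sum_iso :: "'a::{real_vector,topological_space} set \<Rightarrow> bool" where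
  "Z_sum_iso A \<longleftrightarrow>
     (\<forall>z\<in>fin_supp A. \<forall>w\<in>fin_supp A. Z_sum_map (\<lambda>a. z a + w a) = Z_sum_map z + Z_sum_map w) \<and>
     homeomorphic_map (Z_fin_top A) (subtopology euclidean (int_span A)) Z_sum_map"

definition R_sum_iso :: "'a::{real_vector,topological_space} set \<Rightarrow> bool" where
  "R_sum_iso A \<longleftrightarrow>
     (\<forall>r\<in>fin_supp A. \<forall>s\<in>fin_supp A. R_sum_map (\<lambda>a. r a + s a) = R_sum_map r + R_sum_map s) \<and>
     (\<forall>c. \<forall>r\<in>fin_supp A. R_sum_map (\<lambda>a. c * r a) = c *\<^sub>R R_sum_map r) \<and>
     homeomorphic_map (R_fin_top A) (subtopology euclidean (span A)) R_sum_map"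

end

theory Submission
  imports Defs
begin

text \<open>In a weak topology every neighbourhood of \<open>0\<close> contains a set on which finitely many
continuous functionals are small, so each condition can be tested against finitely many functionals
at a time. Absolute Cauchy summability says that every continuous functional vanishes on all but
finitely many elements of \<open>A\<close>; minimality lets finitely many functionals bound the coefficient of a
fixed element in any combination; together they give topological linear independence. Conversely,
if \<open>A\<close> is topologically independent but some functional is nonzero on infinitely many elements, or
some element lies in the closure of the span of the others, there is a real relation annihilated
by finitely many functionals, and Dirichlet's simultaneous approximation turns it into an integer
combination on which these functionals are small while one of its terms is not. For the summation
maps, linear independence makes the coordinates of the inverse continuous; on the lattice these
coordinates are integer valued, hence locally constant, which gives the group isomorphism, and the
continuity of its inverse at \<open>0\<close> gives back topological independence.\<close>

section \<open>Neighbourhoods in the weak topology\<close>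

definition weak_ball :: "('a \<Rightarrow> real) set \<Rightarrow> 'a \<Rightarrow> real \<Rightarrow> 'a set" where
  "weak_ball F x e = {y. \<forall>f\<in>F. \<bar>f y - f x\<bar> < e}"

lemma weak_ball_antimono: "F \<subseteq> G \<Longrightarrow> d \<le> e \<Longrightarrow> weak_ball G x d \<subseteq> weak_ball F x e"
  unfolding weak_ball_def by fastforce

lemma centre_in_weak_ball: "e > 0 \<Longrightarrow> x \<in> weak_ball F x e"
  unfolding weak_ball_def by simp

lemma mem_weak_ball_iff:
  assumes "\<forall>f\<in>F. cont_lin_functional f"
  shows "y \<in> weak_ball F x e \<longleftrightarrow> (\<forall>f\<in>F. \<bar>f (y - x)\<bar> < e)"
  using assms by (simp add: weak_ball_def cont_lin_functional_def linear_diff)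

lemma mem_weak_ball_0_iff:
  "\<forall>f\<in>F. cont_lin_functional f \<Longrightarrow> y \<in> weak_ball F 0 e \<longleftrightarrow> (\<forall>f\<in>F. \<bar>f y\<bar> < e)"
  by (simp add: mem_weak_ball_iff)

lemma open_weak_ball:
  assumes "finite F" "\<forall>f\<in>F. cont_lin_functional f"
  shows "open (weak_ball F x e)"
proof -
  have "weak_ball F x e = (\<Inter>f\<in>F. f -` ball (f x) e)"
    by (auto simp: weak_ball_def dist_real_def abs_minus_commute)
  moreover have "open (f -` ball (f x) e)" if "f \<in> F" for f
    using that assms(2) open_vimage[OF open_ball] by (auto simp: cont_lin_functional_def)
  ultimately show ?thesis using assms(1) by auto
qed

lemma nbhd0_weak_ball:
  "finite F \<Longrightarrow> \<forall>f\<in>F. cont_lin_functional f \<Longrightarrow> e > 0 \<Longrightarrow> nbhd0 (weak_ball F 0 e)"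
  unfolding nbhd0_def
  by (intro exI[of _ "weak_ball F 0 e"]) (simp add: open_weak_ball centre_in_weak_ball)

lemma generated_open_contains_weak_ball:
  assumes "generate_topology_on {f -` U | f U. cont_lin_functional f \<and> open U} S" "x \<in> S"
  shows "\<exists>F e. finite F \<and> (\<forall>f\<in>F. cont_lin_functional f) \<and> e > 0 \<and> weak_ball F x e \<subseteq> S"
  using assms
proof (induction arbitrary: x rule: generate_topology_on.induct)
  case Empty
  then show ?case by simp
next
  case (Int S T)
  obtain F d where F: "finite F" "\<forall>f\<in>F. cont_lin_functional f" "d > 0" "weak_ball F x d \<subseteq> S"
    using Int.IH(1)[of x] Int.prems by auto
  obtain G e where G: "finite G" "\<forall>f\<in>G. cont_lin_functional f" "e > 0" "weak_ball G x e \<subseteq> T"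
    using Int.IH(2)[of x] Int.prems by auto
  have "weak_ball (F \<union> G) x (min d e) \<subseteq> weak_ball F x d"
    "weak_ball (F \<union> G) x (min d e) \<subseteq> weak_ball G x e"
    by (simp_all add: weak_ball_antimono)
  with F G show ?case
    by (intro exI[of _ "F \<union> G"] exI[of _ "min d e"]) auto
next
  case (UN K)
  then obtain S where "S \<in> K" "x \<in> S" by auto
  then obtain F e where "finite F" "\<forall>f\<in>F. cont_lin_functional f" "e > 0" "weak_ball F x e \<subseteq> S"
    using UN.IH by meson
  with \<open>S \<in> K\<close> show ?case by (intro exI[of _ F] exI[of _ e]) auto
next
  case (Basis s)
  then obtain f U where s: "s = f -` U" "cont_lin_functional f" "open U" by auto
  moreover have "f x \<in> U" using Basis.prems s(1) by simp
  ultimately obtain e where "e > 0" "ball (f x) e \<subseteq> U"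
    using open_contains_ball_eq by blast
  have "weak_ball {f} x e \<subseteq> s"
  proof
    fix y assume "y \<in> weak_ball {f} x e"
    then have "f y \<in> ball (f x) e" by (simp add: weak_ball_def dist_real_def abs_minus_commute)
    then show "y \<in> s" using \<open>ball (f x) e \<subseteq> U\<close> s(1) by auto
  qed
  then show ?case using s(2) \<open>e > 0\<close> by (intro exI[of _ "{f}"] exI[of _ e]) auto
qed

lemma weak_open_contains_weak_ball:
  fixes S :: "'a::{real_vector,topological_space} set"
  assumes "weak_topology_tvs TYPE('a)" "open S" "x \<in> S"
  obtains F e where "finite F" "\<forall>f\<in>F. cont_lin_functional f" "e > 0" "weak_ball F x e \<subseteq> S"
proof -
  have "openin (euclidean :: 'a topology) S" using assms(2) by simp
  then have "openin (topology_generated_by {f -` U | f U. cont_lin_functional f \<and> open U}) S"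
    using assms(1) unfolding weak_topology_tvs_def by simp
  then have "generate_topology_on {f -` U | f U. cont_lin_functional f \<and> open U} S"
    by (rule openin_topology_generated_by)
  from generated_open_contains_weak_ball[OF this assms(3)] show thesis using that by blast
qed

lemma nbhd0_contains_weak_ball:
  fixes W :: "'a::{real_vector,topological_space} set"
  assumes "weak_topology_tvs TYPE('a)" "nbhd0 W"
  obtains F e where "finite F" "\<forall>f\<in>F. cont_lin_functional f" "e > 0" "weak_ball F 0 e \<subseteq> W"
proof -
  obtain U where "open U" "0 \<in> U" "U \<subseteq> W" using assms(2) unfolding nbhd0_def by blast
  then obtain F e where F: "finite F" "\<forall>f\<in>F. cont_lin_functional f" "e > 0" "weak_ball F 0 e \<subseteq> U"
    using weak_open_contains_weak_ball[OF assms(1)] by blast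
  show thesis by (rule that[OF F(1-3) order_trans[OF F(4) \<open>U \<subseteq> W\<close>]])
qed

lemma separating_functional:
  fixes a :: "'a::{real_vector,t2_space}"
  assumes "weak_topology_tvs TYPE('a)" "a \<noteq> 0"
  obtains f where "cont_lin_functional f" "f a \<noteq> 0"
proof -
  obtain U where U: "open U" "0 \<in> U" "a \<notin> U"
    using t1_space[OF assms(2)[symmetric]] by blast
  obtain F e where F: "\<forall>f\<in>F. cont_lin_functional f" "e > 0" "weak_ball F 0 e \<subseteq> U"
    using weak_open_contains_weak_ball[OF assms(1) U(1,2)] by metis
  then have "a \<notin> weak_ball F 0 e" using U(3) by auto
  then obtain f where "f \<in> F" "\<not> \<bar>f a\<bar> < e"
    using F(1) by (auto simp: mem_weak_ball_0_iff)
  then have "f a \<noteq> 0" using F(2) by auto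
  with F(1) \<open>f \<in> F\<close> that show thesis by blast
qed

lemma continuous_map_into_weak:
  fixes h :: "'b \<Rightarrow> 'a::{real_vector,topological_space}"
  assumes "weak_topology_tvs TYPE('a)"
    and "\<And>g. cont_lin_functional g \<Longrightarrow> continuous_map X euclideanreal (\<lambda>x. g (h x))"
  shows "continuous_map X euclidean h"
proof -
  have "openin X {x \<in> topspace X. h x \<in> S}"
    if "generate_topology_on {f -` U | f U. cont_lin_functional f \<and> open U} S" for S
    using that
  proof (induction rule: generate_topology_on.induct)
    case (Int S T)
    have "{x \<in> topspace X. h x \<in> S \<inter> T} = {x \<in> topspace X. h x \<in> S} \<inter> {x \<in> topspace X. h x \<in> T}"
      by auto
    then show ?case using Int.IH by auto
  next
    case (UN K)
    have "{x \<in> topspace X. h x \<in> \<Union>K} = (\<Union>S\<in>K. {x \<in> topspace X. h x \<in> S})" by auto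
    then show ?case using UN.IH by auto
  next
    case (Basis s)
    then obtain f U where "s = f -` U" "cont_lin_functional f" "open U" by blast
    then show ?case using assms(2) by (simp add: continuous_map)
  qed simp
  note generated = this
  show ?thesis
    unfolding continuous_map
  proof (intro conjI allI impI)
    show "h ` topspace X \<subseteq> topspace euclidean" by simp
    fix S :: "'a set" assume "openin euclidean S"
    then have "openin (topology_generated_by {f -` U | f U. cont_lin_functional f \<and> open U}) S"
      using assms(1) unfolding weak_topology_tvs_def by simp
    then show "openin X {x \<in> topspace X. h x \<in> S}"
      by (intro generated openin_topology_generated_by)
  qed
qed

section \<open>Diophantine and linear-algebraic tools\<close>

lemma Dirichlet_approx_finite:
  fixes \<theta> :: "'i \<Rightarrow> real"
  assumes "finite I" "\<eta> > 0"
  obtains q :: int and p :: "'i \<Rightarrow> int"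
  where "q > 0" "\<And>i. i \<in> I \<Longrightarrow> \<bar>of_int q * \<theta> i - of_int (p i)\<bar> < \<eta>"
proof -
  obtain n where "inverse (real (Suc n)) < \<eta>" using reals_Archimedean[OF assms(2)] by blast
  then have N: "Suc n > 0" "1 / real (Suc n) < \<eta>" by (simp_all add: inverse_eq_divide)
  obtain e where e: "bij_betw e {0..<card I} I" using ex_bij_betw_nat_finite[OF assms(1)] by blast
  obtain q p where q: "0 < q" "\<And>j. j < card I \<Longrightarrow> \<bar>of_int q * \<theta> (e j) - of_int (p j)\<bar> < 1 / real (Suc n)"
    using Dirichlet_approx_simult[where \<theta>="\<lambda>j. \<theta> (e j)" and n="card I", OF N(1)] by blast
  have "\<bar>of_int q * \<theta> i - of_int (p (inv_into {0..<card I} e i))\<bar> < \<eta>" if "i \<in> I" for i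
  proof -
    have "i \<in> e ` {0..<card I}" using e that by (simp add: bij_betw_def)
    then have "inv_into {0..<card I} e i \<in> {0..<card I}" "e (inv_into {0..<card I} e i) = i"
      by (rule inv_into_into, rule f_inv_into_f)
    then show ?thesis using q(2)[of "inv_into {0..<card I} e i"] N(2) by simp
  qed
  then show thesis by (rule that[OF q(1)])
qed

lemma nontrivial_combination_in_common_kernel:
  fixes F :: "('a::real_vector \<Rightarrow> real) set" and v :: "'i \<Rightarrow> 'a"
  assumes "finite F" "\<forall>f\<in>F. linear f" "finite I" "card F < card I"
  shows "\<exists>r. (\<exists>i\<in>I. r i \<noteq> 0) \<and> (\<forall>f\<in>F. f (\<Sum>i\<in>I. r i *\<^sub>R v i) = 0)"
  using assms
proof (induction F arbitrary: I v rule: finite_induct)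
  case empty
  then obtain i where "i \<in> I" by fastforce
  then show ?case by (intro exI[of _ "\<lambda>_. 1"]) auto
next
  case (insert h F)
  have h: "linear h" and F: "\<forall>f\<in>F. linear f" using insert.prems(1) by auto
  show ?case
  proof (cases "\<forall>i\<in>I. h (v i) = 0")
    case True
    have "card F < card I" using insert.prems(3) insert.hyps by simp
    then obtain r where r: "\<exists>i\<in>I. r i \<noteq> 0" "\<forall>f\<in>F. f (\<Sum>i\<in>I. r i *\<^sub>R v i) = 0"
      using insert.IH[OF F insert.prems(2)] by blast
    moreover have "h (\<Sum>i\<in>I. r i *\<^sub>R v i) = 0"
      using True by (simp add: linear_sum[OF h] linear_scale[OF h])
    ultimately show ?thesis by (intro exI[of _ r]) auto
  next
    case False
    then obtain i0 where i0: "i0 \<in> I" "h (v i0) \<noteq> 0" by auto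
    \<comment> \<open>eliminate the component along \<open>v i0\<close> and recurse on the remaining vectors\<close>
    define w where "w i = v i - (h (v i) / h (v i0)) *\<^sub>R v i0" for i
    have "card (I - {i0}) > card F"
      using i0(1) insert.prems(2,3) insert.hyps by simp
    moreover have "finite (I - {i0})" using insert.prems(2) by simp
    ultimately obtain s where s: "\<exists>i\<in>I - {i0}. s i \<noteq> 0" "\<forall>f\<in>F. f (\<Sum>i\<in>I - {i0}. s i *\<^sub>R w i) = 0"
      using insert.IH[OF F, of "I - {i0}" w] by blast
    define r where "r i = (if i = i0 then - (\<Sum>j\<in>I - {i0}. s j * (h (v j) / h (v i0))) else s i)" for i
    have "(\<Sum>i\<in>I. r i *\<^sub>R v i) = r i0 *\<^sub>R v i0 + (\<Sum>i\<in>I - {i0}. s i *\<^sub>R v i)"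
      using i0(1) insert.prems(2) by (simp add: sum.remove r_def)
    also have "\<dots> = (\<Sum>i\<in>I - {i0}. s i *\<^sub>R w i)"
      by (simp add: r_def w_def scaleR_diff_right sum_subtractf scaleR_sum_left)
    finally have sum_eq: "(\<Sum>i\<in>I. r i *\<^sub>R v i) = (\<Sum>i\<in>I - {i0}. s i *\<^sub>R w i)" .
    have "h (w i) = 0" for i
      using i0(2) by (simp add: w_def linear_diff[OF h] linear_scale[OF h])
    then have "h (\<Sum>i\<in>I. r i *\<^sub>R v i) = 0"
      unfolding sum_eq by (simp add: linear_sum[OF h] linear_scale[OF h])
    moreover have "\<exists>i\<in>I. r i \<noteq> 0" using s(1) by (auto simp: r_def)
    ultimately show ?thesis using s(2) sum_eq by (intro exI[of _ r]) auto
  qed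
qed

lemma approximation_after_projection:
  fixes f :: "'i \<Rightarrow> 'a::real_vector \<Rightarrow> real"
  assumes "finite J" "\<forall>j\<in>J. linear (f j)" "linear h"
    and "\<forall>e>0. \<exists>m\<in>M. \<bar>h (a - m)\<bar> < e \<and> (\<forall>j\<in>J. \<bar>f j (a - m)\<bar> < e)"
  shows "\<forall>e>0. \<exists>m\<in>M. \<forall>j\<in>J. \<bar>f j ((a - m) - h (a - m) *\<^sub>R u)\<bar> < e"
proof (intro allI impI)
  fix e :: real assume "e > 0"
  define B where "B = (\<Sum>j\<in>J. \<bar>f j u\<bar>)"
  have B: "0 \<le> B" "\<And>j. j \<in> J \<Longrightarrow> \<bar>f j u\<bar> \<le> B"
    unfolding B_def using assms(1) by (auto intro: sum_nonneg member_le_sum)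
  have "e / (1 + B) > 0" using \<open>e > 0\<close> B(1) by simp
  from assms(4)[rule_format, OF this] obtain m
    where m: "m \<in> M" "\<bar>h (a - m)\<bar> < e / (1 + B)" "\<forall>j\<in>J. \<bar>f j (a - m)\<bar> < e / (1 + B)"
    by blast
  have "\<bar>f j ((a - m) - h (a - m) *\<^sub>R u)\<bar> < e" if "j \<in> J" for j
  proof -
    have "\<bar>f j ((a - m) - h (a - m) *\<^sub>R u)\<bar> \<le> \<bar>f j (a - m)\<bar> + \<bar>h (a - m)\<bar> * \<bar>f j u\<bar>"
      using assms(2) that by (simp add: linear_diff linear_scale abs_mult[symmetric] abs_triangle_ineq4)
    also have "\<dots> \<le> \<bar>f j (a - m)\<bar> + \<bar>h (a - m)\<bar> * B"
      using B(2)[OF that] by (simp add: mult_left_mono)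
    also have "\<dots> < e / (1 + B) + e / (1 + B) * B"
      using m(2,3) that B(1) by (intro add_less_le_mono mult_right_mono) auto
    also have "\<dots> = e / (1 + B) * (1 + B)" by (simp only: distrib_left mult_1_right)
    also have "\<dots> = e" using B(1) by simp
    finally show ?thesis .
  qed
  then show "\<exists>m\<in>M. \<forall>j\<in>J. \<bar>f j ((a - m) - h (a - m) *\<^sub>R u)\<bar> < e" using m(1) by blast
qed

lemma linear_compose_projection:
  assumes "linear f" "linear h"
  shows "linear (\<lambda>x. f (x - h x *\<^sub>R u))"
  by (rule linearI) (simp_all add: linear_add[OF assms(2)] linear_scale[OF assms(2)]
      linear_diff[OF assms(1)] linear_add[OF assms(1)] linear_scale[OF assms(1)] algebra_simps)

text \<open>Finitely many linear functionals cannot see the difference between approximating \<open>a\<close> by a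
subspace and reaching it: their joint image of a subspace is a finite-dimensional, hence closed, set.\<close>
lemma approximable_imp_exact:
  fixes f :: "'i \<Rightarrow> 'a::real_vector \<Rightarrow> real"
  assumes "finite J" "\<forall>j\<in>J. linear (f j)" "subspace M"
    and "\<forall>e>0. \<exists>m\<in>M. \<forall>j\<in>J. \<bar>f j (a - m)\<bar> < e"
  shows "\<exists>m\<in>M. \<forall>j\<in>J. f j (a - m) = 0"
  using assms
proof (induction J arbitrary: f rule: finite_induct)
  case empty
  then show ?case using subspace_0[OF assms(3)] by auto
next
  case (insert j0 J)
  define h where "h = f j0"
  have h: "linear h" and J: "\<forall>j\<in>J. linear (f j)" using insert.prems(1) h_def by auto
  show ?case
  proof (cases "\<forall>m\<in>M. h m = 0")
    case True
    have "\<forall>e>0. \<exists>m\<in>M. \<forall>j\<in>J. \<bar>f j (a - m)\<bar> < e"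
      using insert.prems(3) by (metis insertCI)
    then obtain m where m: "m \<in> M" "\<forall>j\<in>J. f j (a - m) = 0"
      using insert.IH[OF J insert.prems(2)] by blast
    have "h a = 0"
    proof (rule ccontr)
      assume "h a \<noteq> 0"
      then obtain m' where "m' \<in> M" "\<bar>h (a - m')\<bar> < \<bar>h a\<bar>"
        using insert.prems(3) unfolding h_def by (meson insertI1 zero_less_abs_iff)
      with True show False by (simp add: linear_diff[OF h])
    qed
    then have "h (a - m) = 0" using True m(1) by (simp add: linear_diff[OF h])
    then show ?thesis using m unfolding h_def by auto
  next
    case False
    then obtain m0 where m0: "m0 \<in> M" "h m0 \<noteq> 0" by auto
    define u where "u = (1 / h m0) *\<^sub>R m0"
    have u: "u \<in> M" "h u = 1"
      using m0 subspace_scale[OF assms(3)] by (auto simp: u_def linear_scale[OF h])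
    \<comment> \<open>compose the remaining functionals with the projection along \<open>u\<close> onto the kernel of \<open>h\<close>\<close>
    define g where "g j = (\<lambda>x. f j (x - h x *\<^sub>R u))" for j
    have g: "\<forall>j\<in>J. linear (g j)"
      unfolding g_def using J linear_compose_projection[OF _ h] by blast
    have "\<forall>e>0. \<exists>m\<in>M. \<forall>j\<in>J. \<bar>g j (a - m)\<bar> < e"
      unfolding g_def using approximation_after_projection[OF insert.hyps(1) J h] insert.prems(3)
      unfolding h_def by auto
    then obtain m1 where m1: "m1 \<in> M" "\<forall>j\<in>J. g j (a - m1) = 0"
      using insert.IH[OF g insert.prems(2)] by blast
    define m where "m = m1 + h (a - m1) *\<^sub>R u"
    have "m \<in> M" unfolding m_def using m1(1) u(1) assms(3) by (simp add: subspace_add subspace_scale)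
    moreover have am: "a - m = (a - m1) - h (a - m1) *\<^sub>R u" unfolding m_def by (simp add: algebra_simps)
    have "h (a - m) = h (a - m1) - h (a - m1) * h u"
      unfolding am by (simp only: linear_diff[OF h] linear_scale[OF h] real_scaleR_def)
    then have "h (a - m) = 0" using u(2) by simp
    moreover have "\<forall>j\<in>J. f j (a - m) = 0" using m1(2) unfolding g_def am by simp
    ultimately show ?thesis unfolding h_def by auto
  qed
qed

lemma closure_span_annihilated_difference:
  assumes "a \<in> closure (span S)" "finite F" "\<forall>f\<in>F. cont_lin_functional f"
  obtains m where "m \<in> span S" "\<forall>g\<in>F. g (a - m) = 0"
proof -
  have "\<forall>e>0. \<exists>m\<in>span S. \<forall>g\<in>F. \<bar>g (a - m)\<bar> < e"
  proof (intro allI impI)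
    fix e :: real assume "e > 0"
    then have "weak_ball F a e \<inter> closure (span S) \<noteq> {}"
      using assms(1) centre_in_weak_ball[of e a F] by auto
    then obtain m where "m \<in> span S" "m \<in> weak_ball F a e"
      using open_Int_closure_eq_empty[OF open_weak_ball[OF assms(2,3)]] by auto
    moreover have "\<bar>g (a - m)\<bar> < e" if "g \<in> F" for g
    proof -
      have "g (a - m) = - g (m - a)" using assms(3) that by (simp add: cont_lin_functional_def linear_diff)
      moreover have "\<bar>g (m - a)\<bar> < e"
        using \<open>m \<in> weak_ball F a e\<close> assms(3) that by (auto simp: mem_weak_ball_iff)
      ultimately show ?thesis by simp
    qed
    ultimately show "\<exists>m\<in>span S. \<forall>g\<in>F. \<bar>g (a - m)\<bar> < e" by blast
  qed
  moreover have "\<forall>g\<in>F. linear g" using assms(3) by (simp add: cont_lin_functional_def)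
  ultimately show thesis
    using approximable_imp_exact[of F "\<lambda>g. g" "span S", OF assms(2) _ subspace_span] that by blast
qed

lemma small_combination_in_weak_ball:
  fixes I :: "'a::{real_vector,topological_space} set"
  assumes "finite F" "\<forall>f\<in>F. cont_lin_functional f" "finite I" "\<delta> > 0"
  obtains \<eta> where "\<eta> > 0" "\<And>c. \<forall>a\<in>I. \<bar>c a\<bar> \<le> \<eta> \<Longrightarrow> (\<Sum>a\<in>I. c a *\<^sub>R a) \<in> weak_ball F 0 \<delta>"
proof
  define C where "C = (\<Sum>f\<in>F. \<Sum>a\<in>I. \<bar>f a\<bar>)"
  have C: "0 \<le> C" "\<And>f. f \<in> F \<Longrightarrow> (\<Sum>a\<in>I. \<bar>f a\<bar>) \<le> C"
    unfolding C_def using assms(1) by (auto intro: sum_nonneg member_le_sum)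
  show "\<delta> / (1 + C) > 0" using assms(4) C(1) by simp
  fix c :: "'a \<Rightarrow> real" assume c: "\<forall>a\<in>I. \<bar>c a\<bar> \<le> \<delta> / (1 + C)"
  have "\<bar>f (\<Sum>a\<in>I. c a *\<^sub>R a)\<bar> < \<delta>" if "f \<in> F" for f
  proof -
    have "\<bar>f (\<Sum>a\<in>I. c a *\<^sub>R a)\<bar> = \<bar>\<Sum>a\<in>I. c a * f a\<bar>"
      using assms(2) that by (simp add: cont_lin_functional_def linear_sum linear_scale)
    also have "\<dots> \<le> (\<Sum>a\<in>I. \<delta> / (1 + C) * \<bar>f a\<bar>)"
    proof (intro order_trans[OF sum_abs] sum_mono)
      fix a assume "a \<in> I"
      then show "\<bar>c a * f a\<bar> \<le> \<delta> / (1 + C) * \<bar>f a\<bar>"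
        unfolding abs_mult using c by (intro mult_right_mono) auto
    qed
    also have "\<dots> = \<delta> / (1 + C) * (\<Sum>a\<in>I. \<bar>f a\<bar>)" by (rule sum_distrib_left[symmetric])
    also have "\<dots> \<le> \<delta> / (1 + C) * C"
      using C(1) C(2)[OF that] assms(4) by (intro mult_left_mono) auto
    also have "\<dots> < \<delta>" using C(1) assms(4) by (simp add: field_simps)
    finally show ?thesis .
  qed
  then show "(\<Sum>a\<in>I. c a *\<^sub>R a) \<in> weak_ball F 0 (\<delta>)"
    using assms(2) by (simp add: mem_weak_ball_0_iff)
qed

lemma integer_combination_near_relation:
  fixes I :: "'a::{real_vector,topological_space} set"
  assumes "finite F" "\<forall>f\<in>F. cont_lin_functional f" "finite I" "\<delta> > 0" "\<epsilon> > 0"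
    and "\<forall>f\<in>F. f (\<Sum>i\<in>I. r i *\<^sub>R i) = 0"
  obtains q :: int and p :: "'a \<Rightarrow> int"
  where "q > 0" "\<And>i. i \<in> I \<Longrightarrow> \<bar>of_int q * r i - of_int (p i)\<bar> < \<epsilon>"
    "(\<Sum>i\<in>I. of_int (p i) *\<^sub>R i) \<in> weak_ball F 0 \<delta>"
proof -
  obtain \<eta> where \<eta>: "\<eta> > 0"
    "\<And>c. \<forall>i\<in>I. \<bar>c i\<bar> \<le> \<eta> \<Longrightarrow> (\<Sum>i\<in>I. c i *\<^sub>R i) \<in> weak_ball F 0 \<delta>"
    using small_combination_in_weak_ball[OF assms(1-4)] by blast
  obtain q p where q: "q > 0" "\<And>i. i \<in> I \<Longrightarrow> \<bar>of_int q * r i - of_int (p i)\<bar> < min \<eta> \<epsilon>"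
    using Dirichlet_approx_finite[OF assms(3), of "min \<eta> \<epsilon>" r] \<eta>(1) assms(5) by auto
  define c where "c i = of_int (p i) - of_int q * r i" for i
  have small: "(\<Sum>i\<in>I. c i *\<^sub>R i) \<in> weak_ball F 0 \<delta>"
    using q(2) by (intro \<eta>(2)) (auto simp: c_def abs_minus_commute less_imp_le)
  have sum_eq: "(\<Sum>i\<in>I. of_int (p i) *\<^sub>R i) = (\<Sum>i\<in>I. c i *\<^sub>R i) + of_int q *\<^sub>R (\<Sum>i\<in>I. r i *\<^sub>R i)"
    by (simp add: c_def scaleR_diff_left sum_subtractf scaleR_sum_right)
  have "\<forall>f\<in>F. f (\<Sum>i\<in>I. of_int (p i) *\<^sub>R i) = f (\<Sum>i\<in>I. c i *\<^sub>R i)"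
    using assms(2,6) unfolding sum_eq by (simp add: cont_lin_functional_def linear_add linear_scale)
  with small have "(\<Sum>i\<in>I. of_int (p i) *\<^sub>R i) \<in> weak_ball F 0 \<delta>"
    using assms(2) by (simp add: mem_weak_ball_0_iff) metis
  with q show thesis using that by auto
qed

section \<open>Topological independence, summability and minimality\<close>

definition cofinitely_annihilated :: "'a::{real_vector,topological_space} set \<Rightarrow> bool" where
  "cofinitely_annihilated A \<longleftrightarrow> (\<forall>g. cont_lin_functional g \<longrightarrow> finite {a\<in>A. g a \<noteq> 0})"

lemma finite_not_annihilated:
  assumes "cofinitely_annihilated A" "finite F" "\<forall>f\<in>F. cont_lin_functional f"
  shows "finite {a\<in>A. \<exists>f\<in>F. f a \<noteq> 0}"
proof -
  have "{a\<in>A. \<exists>f\<in>F. f a \<noteq> 0} = (\<Union>f\<in>F. {a\<in>A. f a \<noteq> 0})" by auto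
  then show ?thesis using assms unfolding cofinitely_annihilated_def by auto
qed

lemma annihilated_multiple_in_weak_ball:
  "\<forall>f\<in>F. cont_lin_functional f \<Longrightarrow> \<forall>f\<in>F. f a = 0 \<Longrightarrow> e > 0 \<Longrightarrow> c *\<^sub>R a \<in> weak_ball F 0 e"
  by (auto simp: mem_weak_ball_0_iff cont_lin_functional_def linear_scale)

lemma one_le_ceiling_inverse_mult: "(x::real) \<noteq> 0 \<Longrightarrow> 1 \<le> \<bar>of_int \<lceil>1 / \<bar>x\<bar>\<rceil> * x\<bar>"
proof -
  assume "x \<noteq> 0"
  have "1 / \<bar>x\<bar> \<le> \<bar>of_int \<lceil>1 / \<bar>x\<bar>\<rceil>\<bar>" by (rule order_trans[OF le_of_int_ceiling abs_ge_self])
  then have "1 / \<bar>x\<bar> * \<bar>x\<bar> \<le> \<bar>of_int \<lceil>1 / \<bar>x\<bar>\<rceil>\<bar> * \<bar>x\<bar>" by (intro mult_right_mono) auto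
  with \<open>x \<noteq> 0\<close> show ?thesis by (simp add: abs_mult)
qed

lemma abs_cauchy_summable_imp_cofinitely_annihilated:
  fixes A :: "'a::{real_vector,topological_space} set"
  assumes "abs_cauchy_summable A"
  shows "cofinitely_annihilated A"
  unfolding cofinitely_annihilated_def
proof (intro allI impI)
  fix g :: "'a \<Rightarrow> real" assume g: "cont_lin_functional g"
  obtain F where F: "finite F" "int_span (A - F) \<subseteq> weak_ball {g} 0 1"
    using assms nbhd0_weak_ball[of "{g}" 1] g unfolding abs_cauchy_summable_def by auto
  have "a \<in> F" if "a \<in> A" "g a \<noteq> 0" for a
  proof (rule ccontr)
    assume "a \<notin> F"
    define k where "k = \<lceil>1 / \<bar>g a\<bar>\<rceil>"
    have "of_int k *\<^sub>R a \<in> int_span (A - F)"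
      unfolding int_span_def using that(1) \<open>a \<notin> F\<close>
      by (intro CollectI exI[of _ "{a}"] exI[of _ "\<lambda>_. k"]) auto
    then have "\<bar>of_int k * g a\<bar> < 1"
      using F(2) g by (auto simp: mem_weak_ball_0_iff cont_lin_functional_def linear_scale)
    then show False using one_le_ceiling_inverse_mult[OF that(2)] unfolding k_def by simp
  qed
  then show "finite {a\<in>A. g a \<noteq> 0}" using F(1) by (auto intro: finite_subset)
qed

lemma cofinitely_annihilated_imp_abs_cauchy_summable:
  fixes A :: "'a::{real_vector,topological_space} set"
  assumes weak: "weak_topology_tvs TYPE('a)" and cofin: "cofinitely_annihilated A"
  shows "abs_cauchy_summable A"
  unfolding abs_cauchy_summable_def
proof (intro allI impI)
  fix V :: "'a set" assume "nbhd0 V"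
  obtain F e where F: "finite F" "\<forall>f\<in>F. cont_lin_functional f" "e > 0" "weak_ball F 0 e \<subseteq> V"
    by (rule nbhd0_contains_weak_ball[OF weak \<open>nbhd0 V\<close>])
  define G where "G = {a\<in>A. \<exists>f\<in>F. f a \<noteq> 0}"
  have "y \<in> weak_ball F 0 e" if "y \<in> int_span (A - G)" for y
  proof -
    obtain H z where H: "finite H" "H \<subseteq> A - G" "y = (\<Sum>a\<in>H. of_int (z a) *\<^sub>R a)"
      using \<open>y \<in> int_span (A - G)\<close> unfolding int_span_def by auto
    have "\<forall>f\<in>F. \<bar>f y\<bar> < e"
    proof
      fix f assume "f \<in> F"
      have "\<forall>a\<in>H. f a = 0" using H(2) \<open>f \<in> F\<close> by (auto simp: G_def)
      then show "\<bar>f y\<bar> < e" using H(3) F(2,3) \<open>f \<in> F\<close>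
        by (simp add: cont_lin_functional_def linear_sum linear_scale)
    qed
    then show ?thesis using F(2) by (simp add: mem_weak_ball_0_iff)
  qed
  then show "\<exists>G. finite G \<and> G \<subseteq> A \<and> int_span (A - G) \<subseteq> V"
    using finite_not_annihilated[OF cofin F(1,2)] F(4)
    by (intro exI[of _ G]) (auto simp: G_def)
qed

lemma top_indep_imp_cofinitely_annihilated:
  fixes A :: "'a::{real_vector,topological_space} set"
  assumes weak: "weak_topology_tvs TYPE('a)" and ti: "top_indep A"
  shows "cofinitely_annihilated A"
  unfolding cofinitely_annihilated_def
proof (intro allI impI, rule ccontr)
  fix g :: "'a \<Rightarrow> real" assume g: "cont_lin_functional g" and inf: "infinite {a\<in>A. g a \<noteq> 0}"
  obtain U where U: "nbhd0 U" "\<forall>H z. finite H \<and> H \<subseteq> A \<and> (\<Sum>a\<in>H. of_int (z a) *\<^sub>R a) \<in> U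
      \<longrightarrow> (\<forall>a\<in>H. of_int (z a) *\<^sub>R a \<in> weak_ball {g} 0 1)"
    using ti nbhd0_weak_ball[of "{g}" 1] g unfolding top_indep_def by auto
  obtain F \<delta> where F: "finite F" "\<forall>f\<in>F. cont_lin_functional f" "\<delta> > 0" "weak_ball F 0 \<delta> \<subseteq> U"
    by (rule nbhd0_contains_weak_ball[OF weak U(1)])
  obtain I where I: "finite I" "card I = Suc (card F)" "I \<subseteq> {a\<in>A. g a \<noteq> 0}"
    using infinite_arbitrarily_large[OF inf] by blast
  obtain r where r: "\<exists>i\<in>I. r i \<noteq> 0" "\<forall>f\<in>F. f (\<Sum>i\<in>I. r i *\<^sub>R i) = 0"
    using nontrivial_combination_in_common_kernel[OF F(1) _ I(1), of "\<lambda>i. i"] F(2) I(2)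
    by (auto simp: cont_lin_functional_def)
  then obtain a where a: "a \<in> I" "r a \<noteq> 0" by blast
  have ga: "g a \<noteq> 0" "a \<in> A" using a(1) I(3) by auto
  \<comment> \<open>rescale the relation so that its coefficient at \<open>a\<close> exceeds \<open>1 / \<bar>g a\<bar>\<close>\<close>
  define t where "t = (1 / \<bar>g a\<bar> + 1) / \<bar>r a\<bar>"
  define s where "s i = t * r i" for i
  have "(\<Sum>i\<in>I. s i *\<^sub>R i) = t *\<^sub>R (\<Sum>i\<in>I. r i *\<^sub>R i)" by (simp add: s_def scaleR_sum_right)
  then have "\<forall>f\<in>F. f (\<Sum>i\<in>I. s i *\<^sub>R i) = 0"
    using r(2) F(2) by (simp add: cont_lin_functional_def linear_scale)
  then obtain q p where qp: "q > 0" "\<And>i. i \<in> I \<Longrightarrow> \<bar>of_int q * s i - of_int (p i)\<bar> < 1 / 2"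
      "(\<Sum>i\<in>I. of_int (p i) *\<^sub>R i) \<in> weak_ball F 0 \<delta>"
    using integer_combination_near_relation[OF F(1,2) I(1) F(3), of "1 / 2" s] by auto
  then have "of_int (p a) *\<^sub>R a \<in> weak_ball {g} 0 1"
    using U(2)[rule_format, of I p] F(4) I(1,3) a(1) by auto
  then have small: "\<bar>of_int (p a)\<bar> * \<bar>g a\<bar> < 1"
    using g by (simp add: mem_weak_ball_0_iff cont_lin_functional_def linear_scale abs_mult)
  have "\<bar>s a\<bar> = 1 / \<bar>g a\<bar> + 1" using a(2) by (simp add: s_def t_def abs_mult)
  moreover have "\<bar>s a\<bar> \<le> \<bar>of_int q * s a\<bar>"
    using qp(1) by (simp add: abs_mult mult_le_cancel_right1)
  ultimately have "1 / \<bar>g a\<bar> + 1 / 2 \<le> \<bar>of_int (p a)\<bar>" using qp(2)[OF a(1)] by linarith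
  then have "(1 / \<bar>g a\<bar> + 1 / 2) * \<bar>g a\<bar> \<le> \<bar>of_int (p a)\<bar> * \<bar>g a\<bar>"
    by (intro mult_right_mono) auto
  with small ga(1) show False by (simp add: distrib_right)
qed

lemma top_indep_imp_minimal:
  fixes A :: "'a::{real_vector,t2_space} set"
  assumes weak: "weak_topology_tvs TYPE('a)" and A0: "0 \<notin> A" and ti: "top_indep A"
  shows "minimal_set A"
  unfolding minimal_set_def
proof (intro ballI notI)
  fix a assume a: "a \<in> A" "a \<in> closure (span (A - {a}))"
  have "a \<noteq> 0" using A0 a(1) by auto
  obtain f where f: "cont_lin_functional f" "f a \<noteq> 0"
    by (rule separating_functional[OF weak \<open>a \<noteq> 0\<close>])
  then have "\<bar>f a\<bar> / 2 > 0" by simp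
  then obtain U where U: "nbhd0 U" "\<forall>H z. finite H \<and> H \<subseteq> A \<and> (\<Sum>a\<in>H. of_int (z a) *\<^sub>R a) \<in> U
      \<longrightarrow> (\<forall>b\<in>H. of_int (z b) *\<^sub>R b \<in> weak_ball {f} 0 (\<bar>f a\<bar> / 2))"
    using ti nbhd0_weak_ball[of "{f}" "\<bar>f a\<bar> / 2"] f(1) unfolding top_indep_def by auto
  obtain F \<delta> where F: "finite F" "\<forall>f\<in>F. cont_lin_functional f" "\<delta> > 0" "weak_ball F 0 \<delta> \<subseteq> U"
    by (rule nbhd0_contains_weak_ball[OF weak U(1)])
  obtain m where m: "m \<in> span (A - {a})" "\<forall>g\<in>F. g (a - m) = 0"
    by (rule closure_span_annihilated_difference[OF a(2) F(1,2)])
  then obtain B c where B: "finite B" "B \<subseteq> A - {a}" "m = (\<Sum>b\<in>B. c b *\<^sub>R b)"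
    unfolding span_explicit by blast
  define r where "r i = (if i = a then 1 else - c i)" for i
  have "a \<notin> B" using B(2) by blast
  then have "(\<Sum>i\<in>insert a B. r i *\<^sub>R i) = a - m"
    using B(1) by (simp add: B(3) r_def sum_negf[symmetric]) (rule sum.cong, auto)
  then obtain q p where qp: "q > 0" "\<And>i. i \<in> insert a B \<Longrightarrow> \<bar>of_int q * r i - of_int (p i)\<bar> < 1 / 2"
      "(\<Sum>i\<in>insert a B. of_int (p i) *\<^sub>R i) \<in> weak_ball F 0 \<delta>"
    using integer_combination_near_relation[OF F(1,2) _ F(3), of "insert a B" "1 / 2" r] m(2) B(1)
    by auto
  moreover have "insert a B \<subseteq> A" using B(2) a(1) by auto
  ultimately have "of_int (p a) *\<^sub>R a \<in> weak_ball {f} 0 (\<bar>f a\<bar> / 2)"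
    using U(2)[rule_format, of "insert a B" p] F(4) B(1) by auto
  then have "\<bar>of_int (p a)\<bar> * \<bar>f a\<bar> < 1 / 2 * \<bar>f a\<bar>"
    using f(1) by (simp add: mem_weak_ball_0_iff cont_lin_functional_def linear_scale abs_mult)
  moreover have "1 / 2 \<le> \<bar>of_int (p a) :: real\<bar>"
  proof -
    have "(1::real) \<le> of_int q" using qp(1) by simp
    moreover have "\<bar>of_int q - of_int (p a)\<bar> < (1::real) / 2" using qp(2)[of a] by (simp add: r_def)
    ultimately show ?thesis by linarith
  qed
  then have "1 / 2 * \<bar>f a\<bar> \<le> \<bar>of_int (p a)\<bar> * \<bar>f a\<bar>" by (rule mult_right_mono) simp
  ultimately show False by linarith
qed

lemma minimal_coefficient_bound:
  fixes A :: "'a::{real_vector,topological_space} set"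
  assumes weak: "weak_topology_tvs TYPE('a)" and "minimal_set A" "a \<in> A" "\<eta> > 0"
  obtains F \<delta> where "finite F" "\<forall>f\<in>F. cont_lin_functional f" "\<delta> > 0"
    "\<And>H r. finite H \<Longrightarrow> H \<subseteq> A \<Longrightarrow> a \<in> H \<Longrightarrow> (\<Sum>b\<in>H. r b *\<^sub>R b) \<in> weak_ball F 0 \<delta> \<Longrightarrow> \<bar>r a\<bar> \<le> \<eta>"
proof -
  have "a \<in> - closure (span (A - {a}))" using assms(2,3) unfolding minimal_set_def by blast
  then obtain F e where F: "finite F" "\<forall>f\<in>F. cont_lin_functional f" "e > 0"
      "weak_ball F a e \<subseteq> - closure (span (A - {a}))"
    using weak_open_contains_weak_ball[OF weak] by (metis open_Compl closed_closure)
  show thesis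
  proof (rule that[OF F(1,2)])
    show "\<eta> * e > 0" using assms(4) F(3) by simp
    fix H r assume H: "finite H" "H \<subseteq> A" "a \<in> H" and x: "(\<Sum>b\<in>H. r b *\<^sub>R b) \<in> weak_ball F 0 (\<eta> * e)"
    show "\<bar>r a\<bar> \<le> \<eta>"
    proof (rule ccontr)
      assume "\<not> \<bar>r a\<bar> \<le> \<eta>"
      then have ra: "\<eta> < \<bar>r a\<bar>" "r a \<noteq> 0" using assms(4) by auto
      \<comment> \<open>solving the combination for \<open>a\<close> yields a point of the span close to \<open>a\<close>\<close>
      define m where "m = - (1 / r a) *\<^sub>R (\<Sum>b\<in>H - {a}. r b *\<^sub>R b)"
      have "m \<in> span (A - {a})" unfolding m_def using H(2) by (intro span_scale span_sum span_base) auto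
      have "a - m = (1 / r a) *\<^sub>R (\<Sum>b\<in>H. r b *\<^sub>R b)"
        using ra assms(4) H(1,3) by (simp add: m_def sum.remove[of H a] scaleR_add_right)
      then have "\<bar>g (a - m)\<bar> < e" if "g \<in> F" for g
      proof -
        assume am: "a - m = (1 / r a) *\<^sub>R (\<Sum>b\<in>H. r b *\<^sub>R b)"
        have "\<bar>g (\<Sum>b\<in>H. r b *\<^sub>R b)\<bar> < \<eta> * e" using x F(2) that by (simp add: mem_weak_ball_0_iff)
        also have "\<dots> \<le> \<bar>r a\<bar> * e" using ra F(3) by simp
        finally show ?thesis
          using F(2) that ra assms(4)
          by (simp add: am cont_lin_functional_def linear_scale abs_mult pos_divide_less_eq mult.commute)
      qed
      then have "m \<in> weak_ball F a e" using F(2) by (simp add: mem_weak_ball_iff abs_minus_commute cont_lin_functional_def linear_diff)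
      then show False using F(4) \<open>m \<in> span (A - {a})\<close> closure_subset by blast
    qed
  qed
qed

lemma minimal_coefficients_bound:
  fixes A :: "'a::{real_vector,topological_space} set"
  assumes weak: "weak_topology_tvs TYPE('a)" and min: "minimal_set A"
    and "finite G" "G \<subseteq> A" "\<eta> > 0"
  shows "\<exists>F \<delta>. finite F \<and> (\<forall>f\<in>F. cont_lin_functional f) \<and> \<delta> > 0 \<and>
    (\<forall>H r a. finite H \<and> H \<subseteq> A \<and> a \<in> H \<inter> G \<and> (\<Sum>b\<in>H. r b *\<^sub>R b) \<in> weak_ball F 0 \<delta> \<longrightarrow> \<bar>r a\<bar> \<le> \<eta>)"
  using assms(3,4)
proof (induction G rule: finite_induct)
  case empty
  show ?case by (intro exI[of _ "{}"] exI[of _ 1]) auto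
next
  case (insert a G)
  then obtain F \<delta> where F: "finite F" "\<forall>f\<in>F. cont_lin_functional f" "\<delta> > 0"
    "\<forall>H r b. finite H \<and> H \<subseteq> A \<and> b \<in> H \<inter> G \<and> (\<Sum>c\<in>H. r c *\<^sub>R c) \<in> weak_ball F 0 \<delta> \<longrightarrow> \<bar>r b\<bar> \<le> \<eta>"
    by auto
  have "a \<in> A" using insert.prems by simp
  obtain Fa \<delta>a where Fa: "finite Fa" "\<forall>f\<in>Fa. cont_lin_functional f" "\<delta>a > 0"
    "\<And>H r. finite H \<Longrightarrow> H \<subseteq> A \<Longrightarrow> a \<in> H \<Longrightarrow> (\<Sum>b\<in>H. r b *\<^sub>R b) \<in> weak_ball Fa 0 \<delta>a \<Longrightarrow> \<bar>r a\<bar> \<le> \<eta>"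
    by (rule minimal_coefficient_bound[OF weak min \<open>a \<in> A\<close> assms(5)]) (rule that)
  have "\<bar>r b\<bar> \<le> \<eta>" if H: "finite H" "H \<subseteq> A" "b \<in> H \<inter> insert a G"
    and x: "(\<Sum>c\<in>H. r c *\<^sub>R c) \<in> weak_ball (F \<union> Fa) 0 (min \<delta> \<delta>a)" for H r b
  proof (cases "b = a")
    case True
    have "(\<Sum>c\<in>H. r c *\<^sub>R c) \<in> weak_ball Fa 0 \<delta>a" using x weak_ball_antimono[of Fa "F \<union> Fa" "min \<delta> \<delta>a" \<delta>a] by auto
    then show ?thesis using Fa(4)[OF H(1,2)] H(3) True by blast
  next
    case False
    have "(\<Sum>c\<in>H. r c *\<^sub>R c) \<in> weak_ball F 0 \<delta>" using x weak_ball_antimono[of F "F \<union> Fa" "min \<delta> \<delta>a" \<delta>] by auto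
    then show ?thesis using F(4) H False by blast
  qed
  then show ?case
    using F(1-3) Fa(1-3) by (intro exI[of _ "F \<union> Fa"] exI[of _ "min \<delta> \<delta>a"]) auto
qed

lemma cofinitely_annihilated_minimal_imp_top_lin_indep:
  fixes A :: "'a::{real_vector,topological_space} set"
  assumes weak: "weak_topology_tvs TYPE('a)"
    and cofin: "cofinitely_annihilated A" and min: "minimal_set A"
  shows "top_lin_indep A"
  unfolding top_lin_indep_def
proof (intro allI impI)
  fix W :: "'a set" assume "nbhd0 W"
  obtain F \<epsilon> where F: "finite F" "\<forall>f\<in>F. cont_lin_functional f" "\<epsilon> > 0" "weak_ball F 0 \<epsilon> \<subseteq> W"
    by (rule nbhd0_contains_weak_ball[OF weak \<open>nbhd0 W\<close>])
  define G where "G = {a\<in>A. \<exists>f\<in>F. f a \<noteq> 0}"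
  have G: "finite G" using finite_not_annihilated[OF cofin F(1,2)] by (simp add: G_def)
  obtain \<eta> where \<eta>: "\<eta> > 0" "\<And>c. \<forall>a\<in>G. \<bar>c a\<bar> \<le> \<eta> \<Longrightarrow> (\<Sum>a\<in>G. c a *\<^sub>R a) \<in> weak_ball F 0 \<epsilon>"
    using small_combination_in_weak_ball[OF F(1,2) G F(3)] by blast
  have "G \<subseteq> A" by (auto simp: G_def)
  then obtain F' \<delta> where F': "finite F'" "\<forall>f\<in>F'. cont_lin_functional f" "\<delta> > 0"
    "\<forall>H r a. finite H \<and> H \<subseteq> A \<and> a \<in> H \<inter> G \<and> (\<Sum>b\<in>H. r b *\<^sub>R b) \<in> weak_ball F' 0 \<delta> \<longrightarrow> \<bar>r a\<bar> \<le> \<eta>"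
    using minimal_coefficients_bound[OF weak min G _ \<eta>(1)] by blast
  define U where "U = weak_ball F' 0 \<delta>"
  have "nbhd0 U" unfolding U_def using F' by (intro nbhd0_weak_ball) auto
  moreover have "r a *\<^sub>R a \<in> W"
    if H: "finite H" "H \<subseteq> A" "(\<Sum>b\<in>H. r b *\<^sub>R b) \<in> U" and "a \<in> H" for H r a
  proof (cases "a \<in> G")
    case True
    then have "\<bar>r a\<bar> \<le> \<eta>" using F'(4) H \<open>a \<in> H\<close> unfolding U_def by blast
    then have "(\<Sum>b\<in>G. (if b = a then r a else 0) *\<^sub>R b) \<in> weak_ball F 0 \<epsilon>"
      using \<eta>(1) by (intro \<eta>(2)) auto
    then have "r a *\<^sub>R a \<in> weak_ball F 0 \<epsilon>"
      using True G by (simp add: if_distrib[of "\<lambda>c. c *\<^sub>R _"] cong: if_cong)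
    then show ?thesis using F(4) by blast
  next
    case False
    then have "\<forall>f\<in>F. f a = 0" using H(2) \<open>a \<in> H\<close> by (auto simp: G_def)
    then show ?thesis using annihilated_multiple_in_weak_ball[OF F(2) _ F(3)] F(4) by blast
  qed
  ultimately show "\<exists>U. nbhd0 U \<and> (\<forall>H r. finite H \<and> H \<subseteq> A \<and> (\<Sum>a\<in>H. r a *\<^sub>R a) \<in> U
      \<longrightarrow> (\<forall>a\<in>H. r a *\<^sub>R a \<in> W))"
    by blast
qed

lemma top_lin_indep_imp_top_indep:
  fixes A :: "'a::{real_vector,topological_space} set"
  assumes "top_lin_indep A"
  shows "top_indep A"
  unfolding top_indep_def
proof (intro allI impI)
  fix W :: "'a set" assume "nbhd0 W"
  then obtain U where "nbhd0 U" and U: "\<forall>F r. finite F \<and> F \<subseteq> A \<and> (\<Sum>a\<in>F. r a *\<^sub>R a) \<in> U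
      \<longrightarrow> (\<forall>a\<in>F. r a *\<^sub>R a \<in> W)"
    using assms unfolding top_lin_indep_def by blast
  moreover have "\<forall>a\<in>F. of_int (z a) *\<^sub>R a \<in> W"
    if "finite F \<and> F \<subseteq> A \<and> (\<Sum>a\<in>F. of_int (z a) *\<^sub>R a) \<in> U" for F and z :: "'a \<Rightarrow> int"
    using U[rule_format, of F "\<lambda>a. of_int (z a)"] that by simp
  ultimately show "\<exists>U. nbhd0 U \<and> (\<forall>F z. finite F \<and> F \<subseteq> A \<and> (\<Sum>a\<in>F. of_int (z a) *\<^sub>R a) \<in> U
      \<longrightarrow> (\<forall>a\<in>F. of_int (z a) *\<^sub>R a \<in> W))"
    by blast
qed

section \<open>Summation maps\<close>

lemma fin_supp_iff: "r \<in> fin_supp A \<longleftrightarrow> {a. r a \<noteq> 0} \<subseteq> A \<and> finite {a. r a \<noteq> 0}"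
  unfolding fin_supp_def by auto

lemma fin_supp_diff:
  fixes r s :: "'a \<Rightarrow> 'b::group_add"
  assumes "r \<in> fin_supp A" "s \<in> fin_supp A"
  shows "(\<lambda>a. r a - s a) \<in> fin_supp A"
proof -
  have "{a. r a - s a \<noteq> 0} \<subseteq> {a. r a \<noteq> 0} \<union> {a. s a \<noteq> 0}" by auto
  with assms show ?thesis unfolding fin_supp_iff by (blast intro: finite_subset)
qed

lemma fin_supp_of_int: "z \<in> fin_supp A \<Longrightarrow> (\<lambda>a. of_int (z a) :: real) \<in> fin_supp A"
  unfolding fin_supp_iff by simp

lemma fin_supp_restrict: "finite H \<Longrightarrow> H \<subseteq> A \<Longrightarrow> (\<lambda>a. if a \<in> H then r a else 0) \<in> fin_supp A"
  unfolding fin_supp_iff by (auto elim!: finite_subset[rotated])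

lemma R_sum_map_eq_sum:
  "finite G \<Longrightarrow> {a. r a \<noteq> 0} \<subseteq> G \<Longrightarrow> R_sum_map r = (\<Sum>a\<in>G. r a *\<^sub>R a)"
  unfolding R_sum_map_def by (intro sum.mono_neutral_left) auto

lemma Z_sum_map_eq_R_sum_map: "Z_sum_map z = R_sum_map (\<lambda>a. of_int (z a))"
  unfolding Z_sum_map_def R_sum_map_def by simp

lemma R_sum_map_add:
  assumes "r \<in> fin_supp A" "s \<in> fin_supp A"
  shows "R_sum_map (\<lambda>a. r a + s a) = R_sum_map r + R_sum_map s"
proof -
  let ?G = "{a. r a \<noteq> 0} \<union> {a. s a \<noteq> 0}"
  have "finite ?G" using assms by (simp add: fin_supp_iff)
  then show ?thesis
    by (subst (1 2 3) R_sum_map_eq_sum[of ?G]) (auto simp: scaleR_add_left sum.distrib)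
qed

lemma R_sum_map_diff:
  assumes "r \<in> fin_supp A" "s \<in> fin_supp A"
  shows "R_sum_map (\<lambda>a. r a - s a) = R_sum_map r - R_sum_map s"
proof -
  let ?G = "{a. r a \<noteq> 0} \<union> {a. s a \<noteq> 0}"
  have "finite ?G" using assms by (simp add: fin_supp_iff)
  then show ?thesis
    by (subst (1 2 3) R_sum_map_eq_sum[of ?G]) (auto simp: scaleR_diff_left sum_subtractf)
qed

lemma R_sum_map_scale:
  assumes "r \<in> fin_supp A"
  shows "R_sum_map (\<lambda>a. c * r a) = c *\<^sub>R R_sum_map r"
proof -
  have "finite {a. r a \<noteq> 0}" using assms by (simp add: fin_supp_iff)
  then show ?thesis
    by (subst (1 2) R_sum_map_eq_sum[of "{a. r a \<noteq> 0}"]) (auto simp: scaleR_sum_right)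
qed

lemma Z_sum_map_add:
  "r \<in> fin_supp A \<Longrightarrow> s \<in> fin_supp A \<Longrightarrow> Z_sum_map (\<lambda>a. r a + s a) = Z_sum_map r + Z_sum_map s"
  unfolding Z_sum_map_eq_R_sum_map using R_sum_map_add[OF fin_supp_of_int fin_supp_of_int] by simp

lemma R_sum_map_single: "R_sum_map (\<lambda>b. if b = a then c else 0) = c *\<^sub>R a"
  by (subst R_sum_map_eq_sum[of "{a}"]) auto

lemma R_sum_map_image: "R_sum_map ` fin_supp A = span A"
proof
  show "R_sum_map ` fin_supp A \<subseteq> span A"
  proof (rule image_subsetI)
    fix r :: "'a \<Rightarrow> real" assume "r \<in> fin_supp A"
    then show "R_sum_map r \<in> span A"
      unfolding R_sum_map_def fin_supp_iff by (intro span_sum span_scale span_base) auto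
  qed
  show "span A \<subseteq> R_sum_map ` fin_supp A"
  proof
    fix x assume "x \<in> span A"
    then obtain H c where H: "finite H" "H \<subseteq> A" "x = (\<Sum>a\<in>H. c a *\<^sub>R a)"
      unfolding span_explicit by auto
    then have "x = R_sum_map (\<lambda>a. if a \<in> H then c a else 0)"
      by (subst R_sum_map_eq_sum[OF H(1)]) auto
    then show "x \<in> R_sum_map ` fin_supp A" using fin_supp_restrict[OF H(1,2)] by blast
  qed
qed

lemma Z_sum_map_image: "Z_sum_map ` fin_supp A = int_span A"
proof
  show "Z_sum_map ` fin_supp A \<subseteq> int_span A"
  proof (rule image_subsetI)
    fix z :: "'a \<Rightarrow> int" assume "z \<in> fin_supp A"
    then show "Z_sum_map z \<in> int_span A"
      unfolding Z_sum_map_def int_span_def fin_supp_iff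
      by (intro CollectI exI[of _ "{a. z a \<noteq> 0}"] exI[of _ z]) simp
  qed
  show "int_span A \<subseteq> Z_sum_map ` fin_supp A"
  proof
    fix x assume "x \<in> int_span A"
    then obtain H z where H: "finite H" "H \<subseteq> A" "x = (\<Sum>a\<in>H. of_int (z a) *\<^sub>R a)"
      unfolding int_span_def by auto
    then have "x = Z_sum_map (\<lambda>a. if a \<in> H then z a else 0)"
      unfolding Z_sum_map_eq_R_sum_map by (subst R_sum_map_eq_sum[OF H(1)]) auto
    then show "x \<in> Z_sum_map ` fin_supp A" using fin_supp_restrict[OF H(1,2)] by blast
  qed
qed

lemma int_span_subset_span: "int_span A \<subseteq> span A"
  unfolding Z_sum_map_image[symmetric] R_sum_map_image[symmetric] Z_sum_map_eq_R_sum_map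
  using fin_supp_of_int by blast

lemma topspace_R_fin_top [simp]: "topspace (R_fin_top A) = fin_supp A"
  unfolding R_fin_top_def fin_supp_def by (auto simp: PiE_iff)

lemma topspace_Z_fin_top [simp]: "topspace (Z_fin_top A) = fin_supp A"
  unfolding Z_fin_top_def fin_supp_def by (auto simp: PiE_iff)

lemma continuous_map_R_fin_top_coordinate: "continuous_map (R_fin_top A) euclideanreal (\<lambda>r. r k)"
proof -
  have "continuous_map (R_fin_top A)
      (if k \<in> A then euclideanreal else subtopology euclideanreal {0}) (\<lambda>r. r k)"
    unfolding R_fin_top_def
    by (intro continuous_map_from_subtopology continuous_map_product_projection) simp
  then show ?thesis by (cases "k \<in> A") (auto dest: continuous_map_into_fulltopology)
qed

lemma continuous_map_Z_fin_top_coordinate: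
  "k \<in> A \<Longrightarrow> continuous_map (Z_fin_top A) (discrete_topology UNIV) (\<lambda>z. z k)"
  unfolding Z_fin_top_def
  by (metis (mono_tags, lifting) UNIV_I continuous_map_from_subtopology continuous_map_product_projection)

lemma continuous_map_into_R_fin_top:
  assumes "\<And>x. x \<in> topspace X \<Longrightarrow> g x \<in> fin_supp A"
    and "\<And>k. k \<in> A \<Longrightarrow> continuous_map X euclideanreal (\<lambda>x. g x k)"
  shows "continuous_map X (R_fin_top A) g"
  unfolding R_fin_top_def
proof (rule continuous_map_into_subtopology)
  show "g \<in> topspace X \<rightarrow> fin_supp A" using assms(1) by blast
  have "continuous_map X (subtopology euclideanreal {0}) (\<lambda>x. g x k)" if "k \<notin> A" for k
  proof (rule continuous_map_eq)
    show "continuous_map X (subtopology euclideanreal {0}) (\<lambda>x. 0)" by simp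
    show "0 = g x k" if "x \<in> topspace X" for x
      using assms(1)[OF that] \<open>k \<notin> A\<close> by (simp add: fin_supp_def)
  qed
  then show "continuous_map X
      (product_topology (\<lambda>a. if a \<in> A then euclideanreal else subtopology euclideanreal {0}) UNIV) g"
    using assms(2) by (simp add: continuous_map_componentwise_UNIV)
qed

lemma continuous_map_into_Z_fin_top:
  assumes "\<And>x. x \<in> topspace X \<Longrightarrow> g x \<in> fin_supp A"
    and "\<And>k. k \<in> A \<Longrightarrow> continuous_map X (discrete_topology UNIV) (\<lambda>x. g x k)"
  shows "continuous_map X (Z_fin_top A) g"
  unfolding Z_fin_top_def
proof (rule continuous_map_into_subtopology)
  show "g \<in> topspace X \<rightarrow> fin_supp A" using assms(1) by blast
  have "continuous_map X (discrete_topology {0}) (\<lambda>x. g x k)" if "k \<notin> A" for k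
  proof (rule continuous_map_eq)
    show "continuous_map X (discrete_topology {0}) (\<lambda>x. 0)" by simp
    show "0 = g x k" if "x \<in> topspace X" for x
      using assms(1)[OF that] \<open>k \<notin> A\<close> by (simp add: fin_supp_def)
  qed
  then show "continuous_map X
      (product_topology (\<lambda>a. if a \<in> A then discrete_topology UNIV else discrete_topology {0}) UNIV) g"
    using assms(2) by (simp add: continuous_map_componentwise_UNIV)
qed

lemma continuous_map_of_int_imp_discrete:
  fixes \<phi> :: "'b \<Rightarrow> int"
  assumes "continuous_map X euclideanreal (\<lambda>x. of_int (\<phi> x))"
  shows "continuous_map X (discrete_topology UNIV) \<phi>"
proof -
  have "openin X {x \<in> topspace X. \<phi> x \<in> U}" for U
  proof -
    have near: "(of_int m :: real) \<in> ball (of_int n) (1 / 2) \<longleftrightarrow> m = n" for m n :: int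
    proof -
      have "\<bar>of_int n - of_int m\<bar> < (1::real) / 2 \<longleftrightarrow> \<bar>n - m\<bar> < 1" by linarith
      then show ?thesis by (auto simp: dist_real_def)
    qed
    then have eq: "{x \<in> topspace X. \<phi> x \<in> U} =
        {x \<in> topspace X. of_int (\<phi> x) \<in> (\<Union>n\<in>U. ball (of_int n :: real) (1 / 2))}"
      by (auto simp del: mem_ball simp: near)
    show ?thesis unfolding eq by (rule openin_continuous_map_preimage[OF assms]) auto
  qed
  then show ?thesis by (simp add: continuous_map)
qed

lemma inj_on_R_sum_map:
  fixes A :: "'a::{real_vector,t1_space} set"
  assumes "0 \<notin> A" "top_lin_indep A"
  shows "inj_on R_sum_map (fin_supp A)"
proof (rule inj_onI)
  fix r s assume r: "r \<in> fin_supp A" and s: "s \<in> fin_supp A" and "R_sum_map r = R_sum_map s"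
  define d where "d = (\<lambda>a. r a - s a)"
  have d: "d \<in> fin_supp A" "R_sum_map d = 0"
    using fin_supp_diff[OF r s] R_sum_map_diff[OF r s] \<open>R_sum_map r = R_sum_map s\<close>
    by (simp_all add: d_def)
  have "d a = 0" for a
  proof (rule ccontr)
    assume "d a \<noteq> 0"
    then have "a \<in> A" using d(1) by (auto simp: fin_supp_def)
    then have "d a *\<^sub>R a \<noteq> 0" using \<open>d a \<noteq> 0\<close> assms(1) by auto
    then have "nbhd0 (- {d a *\<^sub>R a})" unfolding nbhd0_def by (auto intro!: exI[of _ "- {d a *\<^sub>R a}"])
    then obtain U where U: "nbhd0 U" "\<forall>H r. finite H \<and> H \<subseteq> A \<and> (\<Sum>b\<in>H. r b *\<^sub>R b) \<in> U
        \<longrightarrow> (\<forall>b\<in>H. r b *\<^sub>R b \<in> - {d a *\<^sub>R a})"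
      using assms(2) unfolding top_lin_indep_def by blast
    have "(\<Sum>b\<in>{b. d b \<noteq> 0}. d b *\<^sub>R b) \<in> U"
      using d(2) U(1) by (auto simp: R_sum_map_def nbhd0_def)
    then show False
      using U(2)[rule_format, of "{b. d b \<noteq> 0}" d] d(1) \<open>d a \<noteq> 0\<close> by (auto simp: fin_supp_iff)
  qed
  then show "r = s" by (auto simp: d_def fun_eq_iff)
qed

lemma functional_R_sum_map:
  assumes "cont_lin_functional g" "finite {a\<in>A. g a \<noteq> 0}" "r \<in> fin_supp A"
  shows "g (R_sum_map r) = (\<Sum>a\<in>{a\<in>A. g a \<noteq> 0}. r a * g a)"
proof -
  let ?G = "{a\<in>A. g a \<noteq> 0}"
  let ?S = "{a. r a \<noteq> 0} \<union> ?G"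
  have "finite ?S" using assms(2,3) by (simp add: fin_supp_iff)
  then have "g (R_sum_map r) = (\<Sum>a\<in>?S. r a * g a)"
    using assms(1) by (simp add: R_sum_map_eq_sum[of ?S] cont_lin_functional_def linear_sum linear_scale)
  also have "\<dots> = (\<Sum>a\<in>?G. r a * g a)"
    using assms(3) \<open>finite ?S\<close> by (intro sum.mono_neutral_right) (auto simp: fin_supp_iff)
  finally show ?thesis .
qed

lemma continuous_map_R_sum_map:
  fixes A :: "'a::{real_vector,topological_space} set"
  assumes weak: "weak_topology_tvs TYPE('a)" and cofin: "cofinitely_annihilated A"
  shows "continuous_map (R_fin_top A) (top_of_set (span A)) R_sum_map"
proof (rule continuous_map_into_subtopology)
  show "R_sum_map \<in> topspace (R_fin_top A) \<rightarrow> span A" using R_sum_map_image by auto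
  show "continuous_map (R_fin_top A) euclidean R_sum_map"
  proof (rule continuous_map_into_weak[OF weak])
    fix g :: "'a \<Rightarrow> real" assume g: "cont_lin_functional g"
    then have G: "finite {a\<in>A. g a \<noteq> 0}" using cofin by (simp add: cofinitely_annihilated_def)
    have "continuous_map (R_fin_top A) euclideanreal (\<lambda>r. \<Sum>a\<in>{a\<in>A. g a \<noteq> 0}. r a * g a)"
      by (intro continuous_map_sum[OF G] continuous_map_real_mult_right
          continuous_map_R_fin_top_coordinate)
    then show "continuous_map (R_fin_top A) euclideanreal (\<lambda>r. g (R_sum_map r))"
      by (rule continuous_map_eq) (simp add: functional_R_sum_map[OF g G])
  qed
qed

lemma top_lin_indep_coordinate_small:
  fixes A :: "'a::{real_vector,t2_space} set"
  assumes weak: "weak_topology_tvs TYPE('a)" and "0 \<notin> A" "top_lin_indep A" "k \<in> A" "\<epsilon> > 0"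
  obtains F \<delta> where "finite F" "\<forall>f\<in>F. cont_lin_functional f" "\<delta> > 0"
    "\<And>r. r \<in> fin_supp A \<Longrightarrow> R_sum_map r \<in> weak_ball F 0 \<delta> \<Longrightarrow> \<bar>r k\<bar> < \<epsilon>"
proof -
  have "k \<noteq> 0" using assms(2,4) by auto
  obtain f where f: "cont_lin_functional f" "f k \<noteq> 0" by (rule separating_functional[OF weak \<open>k \<noteq> 0\<close>])
  then have "nbhd0 (weak_ball {f} 0 (\<epsilon> * \<bar>f k\<bar>))" using assms(5) by (intro nbhd0_weak_ball) auto
  then obtain U where U: "nbhd0 U" "\<forall>H r. finite H \<and> H \<subseteq> A \<and> (\<Sum>b\<in>H. r b *\<^sub>R b) \<in> U
      \<longrightarrow> (\<forall>b\<in>H. r b *\<^sub>R b \<in> weak_ball {f} 0 (\<epsilon> * \<bar>f k\<bar>))"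
    using assms(3) unfolding top_lin_indep_def by blast
  obtain F \<delta> where F: "finite F" "\<forall>f\<in>F. cont_lin_functional f" "\<delta> > 0" "weak_ball F 0 \<delta> \<subseteq> U"
    by (rule nbhd0_contains_weak_ball[OF weak U(1)])
  show thesis
  proof (rule that[OF F(1-3)])
    fix r assume r: "r \<in> fin_supp A" "R_sum_map r \<in> weak_ball F 0 \<delta>"
    show "\<bar>r k\<bar> < \<epsilon>"
    proof (cases "r k = 0")
      case False
      have "(\<Sum>b\<in>{b. r b \<noteq> 0}. r b *\<^sub>R b) \<in> U" using r F(4) by (auto simp: R_sum_map_def)
      then have "r k *\<^sub>R k \<in> weak_ball {f} 0 (\<epsilon> * \<bar>f k\<bar>)"
        using U(2)[rule_format, of "{b. r b \<noteq> 0}" r] r(1) False by (auto simp: fin_supp_iff)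
      then have "\<bar>r k\<bar> * \<bar>f k\<bar> < \<epsilon> * \<bar>f k\<bar>"
        using f(1) by (simp add: mem_weak_ball_0_iff cont_lin_functional_def linear_scale abs_mult)
      then show ?thesis using f(2) by simp
    qed (use assms(5) in simp)
  qed
qed

lemma continuous_on_R_sum_map_inverse_coordinate:
  fixes A :: "'a::{real_vector,t2_space} set"
  assumes weak: "weak_topology_tvs TYPE('a)" and "0 \<notin> A" "top_lin_indep A" "k \<in> A"
    and h: "\<And>y. y \<in> span A \<Longrightarrow> h y \<in> fin_supp A \<and> R_sum_map (h y) = y"
  shows "continuous_on (span A) (\<lambda>y. h y k)"
  unfolding continuous_on_topological
proof (intro ballI allI impI)
  fix x B assume x: "x \<in> span A" and "open B" "h x k \<in> B"
  then obtain \<epsilon> where "\<epsilon> > 0" "ball (h x k) \<epsilon> \<subseteq> B" by (meson open_contains_ball_eq)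
  obtain F \<delta> where F: "finite F" "\<forall>f\<in>F. cont_lin_functional f" "\<delta> > 0"
    "\<And>r. r \<in> fin_supp A \<Longrightarrow> R_sum_map r \<in> weak_ball F 0 \<delta> \<Longrightarrow> \<bar>r k\<bar> < \<epsilon>"
    by (rule top_lin_indep_coordinate_small[OF weak assms(2-4) \<open>\<epsilon> > 0\<close>]) (rule that)
  have "h y k \<in> B" if y: "y \<in> span A" "y \<in> weak_ball F x \<delta>" for y
  proof -
    have "R_sum_map (\<lambda>a. h y a - h x a) = y - x"
      using h[OF x] h[OF y(1)] R_sum_map_diff[of "h y" A "h x"] by simp
    moreover have "y - x \<in> weak_ball F 0 \<delta>" using y(2) F(2) by (simp add: mem_weak_ball_iff)
    moreover have "(\<lambda>a. h y a - h x a) \<in> fin_supp A" using h[OF x] h[OF y(1)] by (simp add: fin_supp_diff)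
    ultimately have "\<bar>h y k - h x k\<bar> < \<epsilon>" using F(4)[of "\<lambda>a. h y a - h x a"] by simp
    then have "h y k \<in> ball (h x k) \<epsilon>" by (simp add: dist_real_def abs_minus_commute)
    then show ?thesis using \<open>ball (h x k) \<epsilon> \<subseteq> B\<close> by blast
  qed
  then show "\<exists>V. open V \<and> x \<in> V \<and> (\<forall>y\<in>span A. y \<in> V \<longrightarrow> h y k \<in> B)"
    using open_weak_ball[OF F(1,2)] centre_in_weak_ball[OF F(3)] by (intro exI[of _ "weak_ball F x \<delta>"]) auto
qed

lemma top_lin_indep_imp_R_sum_iso:
  fixes A :: "'a::{real_vector,t2_space} set"
  assumes weak: "weak_topology_tvs TYPE('a)" and A0: "0 \<notin> A"
    and cofin: "cofinitely_annihilated A" and tl: "top_lin_indep A"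
  shows "R_sum_iso A"
proof -
  define h where "h = inv_into (fin_supp A) R_sum_map"
  have h: "h y \<in> fin_supp A \<and> R_sum_map (h y) = y" if "y \<in> span A" for y
  proof -
    have "y \<in> R_sum_map ` fin_supp A" using that R_sum_map_image[of A] by simp
    then show ?thesis unfolding h_def by (simp add: inv_into_into f_inv_into_f)
  qed
  have "continuous_map (top_of_set (span A)) (R_fin_top A) h"
    using h continuous_on_R_sum_map_inverse_coordinate[OF weak A0 tl _ h]
    by (intro continuous_map_into_R_fin_top) auto
  then have "homeomorphic_maps (R_fin_top A) (top_of_set (span A)) R_sum_map h"
    using continuous_map_R_sum_map[OF weak cofin] h inj_on_R_sum_map[OF A0 tl] R_sum_map_image[of A]
    by (auto simp: homeomorphic_maps_def h_def)
  then show ?thesis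
    using R_sum_map_add R_sum_map_scale homeomorphic_map_maps unfolding R_sum_iso_def by blast
qed

lemma continuous_map_of_int_fin_top:
  "continuous_map (Z_fin_top A) (R_fin_top A) (\<lambda>z a. of_int (z a))"
proof (rule continuous_map_into_R_fin_top)
  show "(\<lambda>a. of_int (z a) :: real) \<in> fin_supp A" if "z \<in> topspace (Z_fin_top A)" for z
    using that by (simp add: fin_supp_of_int)
  fix k assume "k \<in> A"
  show "continuous_map (Z_fin_top A) euclideanreal (\<lambda>z. of_int (z k))"
    using continuous_map_compose[OF continuous_map_Z_fin_top_coordinate[OF \<open>k \<in> A\<close>], of euclideanreal of_int]
    by (simp add: o_def)
qed

lemma continuous_map_Z_sum_map:
  assumes "continuous_map (R_fin_top A) (top_of_set (span A)) R_sum_map"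
  shows "continuous_map (Z_fin_top A) (top_of_set (int_span A)) Z_sum_map"
proof (rule continuous_map_into_subtopology)
  show "continuous_map (Z_fin_top A) euclidean Z_sum_map"
    using continuous_map_compose[OF continuous_map_of_int_fin_top continuous_map_into_fulltopology[OF assms]]
    by (simp add: o_def Z_sum_map_eq_R_sum_map[abs_def])
  show "Z_sum_map \<in> topspace (Z_fin_top A) \<rightarrow> int_span A" using Z_sum_map_image by auto
qed

lemma R_sum_iso_imp_Z_sum_iso:
  assumes "R_sum_iso A"
  shows "Z_sum_iso A"
proof -
  have "homeomorphic_map (R_fin_top A) (top_of_set (span A)) R_sum_map"
    using assms unfolding R_sum_iso_def by (elim conjE)
  then obtain h where "homeomorphic_maps (R_fin_top A) (top_of_set (span A)) R_sum_map h"
    unfolding homeomorphic_map_maps by (elim exE)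
  then have R: "continuous_map (R_fin_top A) (top_of_set (span A)) R_sum_map"
    and h: "continuous_map (top_of_set (span A)) (R_fin_top A) h"
    and hR: "\<And>r. r \<in> fin_supp A \<Longrightarrow> h (R_sum_map r) = r"
    by (auto simp: homeomorphic_maps_def)
  \<comment> \<open>on the lattice, the real coordinates of \<open>h\<close> are integers\<close>
  define g where "g y = (\<lambda>a. \<lfloor>h y a\<rfloor>)" for y
  have hZ: "h (Z_sum_map z) = (\<lambda>a. of_int (z a))" if "z \<in> fin_supp A" for z
    using hR[OF fin_supp_of_int[OF that]] by (simp add: Z_sum_map_eq_R_sum_map)
  then have gZ: "g (Z_sum_map z) = z" if "z \<in> fin_supp A" for z using that by (simp add: g_def)
  have g: "g y \<in> fin_supp A \<and> Z_sum_map (g y) = y \<and> h y = (\<lambda>a. of_int (g y a))"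
    if "y \<in> int_span A" for y
  proof -
    have "y \<in> Z_sum_map ` fin_supp A" using that Z_sum_map_image[of A] by simp
    then obtain z where "z \<in> fin_supp A" "y = Z_sum_map z" by blast
    then show ?thesis using gZ hZ by simp
  qed
  have "continuous_map (Z_fin_top A) (top_of_set (int_span A)) Z_sum_map"
    by (rule continuous_map_Z_sum_map[OF R])
  moreover have "continuous_map (top_of_set (int_span A)) (Z_fin_top A) g"
  proof (rule continuous_map_into_Z_fin_top)
    show "g y \<in> fin_supp A" if "y \<in> topspace (top_of_set (int_span A))" for y
      using g that by simp
    fix k assume "k \<in> A"
    have "continuous_map (top_of_set (span A)) euclideanreal (\<lambda>y. h y k)"
      using continuous_map_compose[OF h continuous_map_R_fin_top_coordinate] by (simp add: o_def)
    then have "continuous_map (top_of_set (int_span A)) euclideanreal (\<lambda>y. h y k)"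
      by (rule continuous_map_from_subtopology_mono[OF _ int_span_subset_span])
    then have "continuous_map (top_of_set (int_span A)) euclideanreal (\<lambda>y. of_int (g y k))"
      by (rule continuous_map_eq) (use g in simp)
    then show "continuous_map (top_of_set (int_span A)) (discrete_topology UNIV) (\<lambda>y. g y k)"
      by (rule continuous_map_of_int_imp_discrete)
  qed
  ultimately have "homeomorphic_maps (Z_fin_top A) (top_of_set (int_span A)) Z_sum_map g"
    using gZ g Z_sum_map_image[of A] by (auto simp: homeomorphic_maps_def)
  then show ?thesis using Z_sum_map_add homeomorphic_map_maps unfolding Z_sum_iso_def by blast
qed

lemma Z_fin_top_open_contains_axes:
  assumes "openin (Z_fin_top A) T" "(\<lambda>_. 0) \<in> T"
  obtains G where "finite G" "\<And>a k. a \<in> A \<Longrightarrow> a \<notin> G \<Longrightarrow> (\<lambda>b. if b = a then k else 0) \<in> T"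
proof -
  let ?X = "\<lambda>a. if a \<in> A then discrete_topology UNIV else discrete_topology {0::int}"
  obtain T' where T': "openin (product_topology ?X UNIV) T'" "T = T' \<inter> fin_supp A"
    using assms(1) unfolding Z_fin_top_def openin_subtopology by blast
  have "(\<lambda>_. 0) \<in> T'" using assms(2) T'(2) by blast
  then obtain U where U: "finite {a. U a \<noteq> topspace (?X a)}" "(\<lambda>_. 0) \<in> Pi\<^sub>E UNIV U"
      "Pi\<^sub>E UNIV U \<subseteq> T'"
    using T'(1) unfolding openin_product_topology_alt by (auto dest!: bspec)
  show thesis
  proof (rule that[OF U(1)])
    fix a k assume a: "a \<in> A" "a \<notin> {a. U a \<noteq> topspace (?X a)}"
    have "(\<lambda>b. if b = a then k else 0) \<in> Pi\<^sub>E UNIV U" using a U(2) by (auto simp: PiE_iff)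
    moreover have "(\<lambda>b. if b = a then k else 0) \<in> fin_supp A" using a(1) by (auto simp: fin_supp_iff)
    ultimately show "(\<lambda>b. if b = a then k else 0) \<in> T" using T'(2) U(3) by blast
  qed
qed

lemma Z_sum_iso_imp_cofinitely_annihilated:
  fixes A :: "'a::{real_vector,topological_space} set"
  assumes "Z_sum_iso A"
  shows "cofinitely_annihilated A"
  unfolding cofinitely_annihilated_def
proof (intro allI impI, rule ccontr)
  fix g :: "'a \<Rightarrow> real" assume g: "cont_lin_functional g" and inf: "infinite {a\<in>A. g a \<noteq> 0}"
  define T where "T = {z \<in> topspace (Z_fin_top A). Z_sum_map z \<in> weak_ball {g} 0 1}"
  have "homeomorphic_map (Z_fin_top A) (top_of_set (int_span A)) Z_sum_map"
    using assms unfolding Z_sum_iso_def by (elim conjE)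
  then have "continuous_map (Z_fin_top A) euclidean Z_sum_map"
    by (rule continuous_map_into_fulltopology[OF homeomorphic_imp_continuous_map])
  then have "openin (Z_fin_top A) T"
    unfolding T_def by (rule openin_continuous_map_preimage) (simp add: open_weak_ball g)
  moreover have "(\<lambda>_. 0) \<in> T"
    by (simp add: T_def fin_supp_iff Z_sum_map_def centre_in_weak_ball)
  ultimately obtain G where G: "finite G"
    "\<And>a k. a \<in> A \<Longrightarrow> a \<notin> G \<Longrightarrow> (\<lambda>b. if b = a then k else 0) \<in> T"
    by (rule Z_fin_top_open_contains_axes) (rule that)
  have "infinite ({a\<in>A. g a \<noteq> 0} - G)" using inf G(1) by simp
  then obtain a where "a \<in> {a\<in>A. g a \<noteq> 0} - G" using infinite_imp_nonempty by blast
  then have a: "a \<in> A" "g a \<noteq> 0" "a \<notin> G" by auto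
  define k where "k = \<lceil>1 / \<bar>g a\<bar>\<rceil>"
  have "Z_sum_map (\<lambda>b. if b = a then k else 0) = of_int k *\<^sub>R a"
    unfolding Z_sum_map_eq_R_sum_map using R_sum_map_single[of a "of_int k"]
    by (simp add: if_distrib[of of_int] cong: if_cong)
  then have "\<bar>of_int k * g a\<bar> < 1"
    using G(2)[OF a(1,3), of k] g by (simp add: T_def mem_weak_ball_0_iff cont_lin_functional_def linear_scale)
  then show False using one_le_ceiling_inverse_mult[OF a(2)] by (simp add: k_def)
qed

lemma Z_sum_iso_coordinates_vanish_near_0:
  fixes A :: "'a::{real_vector,topological_space} set"
  assumes "Z_sum_iso A" "finite G" "G \<subseteq> A"
  obtains U where "open U" "0 \<in> U"
    "\<And>z a. z \<in> fin_supp A \<Longrightarrow> Z_sum_map z \<in> U \<Longrightarrow> a \<in> G \<Longrightarrow> z a = 0"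
proof -
  have "homeomorphic_map (Z_fin_top A) (top_of_set (int_span A)) Z_sum_map"
    using assms(1) unfolding Z_sum_iso_def by (elim conjE)
  then obtain h where "homeomorphic_maps (Z_fin_top A) (top_of_set (int_span A)) Z_sum_map h"
    unfolding homeomorphic_map_maps by (elim exE)
  then have h: "continuous_map (top_of_set (int_span A)) (Z_fin_top A) h"
    and hZ: "\<And>z. z \<in> fin_supp A \<Longrightarrow> h (Z_sum_map z) = z"
    by (auto simp: homeomorphic_maps_def)
  have "openin (top_of_set (int_span A)) {y \<in> int_span A. h y k = 0}" if "k \<in> G" for k
  proof -
    have "continuous_map (top_of_set (int_span A)) (discrete_topology UNIV) (\<lambda>y. h y k)"
      using continuous_map_compose[OF h continuous_map_Z_fin_top_coordinate, of k] that assms(3)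
      by (auto simp: o_def)
    from openin_continuous_map_preimage[OF this, of "{0}"] show ?thesis by simp
  qed
  then have "openin (top_of_set (int_span A)) ((\<Inter>k\<in>G. {y \<in> int_span A. h y k = 0}) \<inter> int_span A)"
    using openin_INT[OF assms(2), of "top_of_set (int_span A)"] by simp
  then obtain U where U: "open U" "int_span A \<inter> U = (\<Inter>k\<in>G. {y \<in> int_span A. h y k = 0}) \<inter> int_span A"
    unfolding openin_open by blast
  show thesis
  proof (rule that[OF U(1)])
    have "Z_sum_map (\<lambda>_. 0) = (0::'a)" "(\<lambda>_. 0 :: int) \<in> fin_supp A" by (simp_all add: Z_sum_map_def fin_supp_iff)
    then have "0 \<in> int_span A" "h 0 = (\<lambda>_. 0)"
      using hZ[of "\<lambda>_. 0"] Z_sum_map_image[of A] by (force, simp)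
    with U(2) show "0 \<in> U" by auto
  next
    fix z a assume z: "z \<in> fin_supp A" "Z_sum_map z \<in> U" and "a \<in> G"
    have "Z_sum_map z \<in> int_span A" using z(1) Z_sum_map_image[of A] by blast
    then have "Z_sum_map z \<in> (\<Inter>k\<in>G. {y \<in> int_span A. h y k = 0})" using z(2) U(2) by blast
    then show "z a = 0" using hZ[OF z(1)] \<open>a \<in> G\<close> by simp
  qed
qed

lemma Z_sum_iso_imp_top_indep:
  fixes A :: "'a::{real_vector,topological_space} set"
  assumes weak: "weak_topology_tvs TYPE('a)" and iso: "Z_sum_iso A"
  shows "top_indep A"
  unfolding top_indep_def
proof (intro allI impI)
  fix W :: "'a set" assume "nbhd0 W"
  obtain F \<epsilon> where F: "finite F" "\<forall>f\<in>F. cont_lin_functional f" "\<epsilon> > 0" "weak_ball F 0 \<epsilon> \<subseteq> W"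
    by (rule nbhd0_contains_weak_ball[OF weak \<open>nbhd0 W\<close>])
  define G where "G = {a\<in>A. \<exists>f\<in>F. f a \<noteq> 0}"
  have G: "finite G" "G \<subseteq> A"
    using finite_not_annihilated[OF Z_sum_iso_imp_cofinitely_annihilated[OF iso] F(1,2)]
    by (auto simp: G_def)
  obtain U where U: "open U" "0 \<in> U"
    "\<And>z a. z \<in> fin_supp A \<Longrightarrow> Z_sum_map z \<in> U \<Longrightarrow> a \<in> G \<Longrightarrow> z a = 0"
    by (rule Z_sum_iso_coordinates_vanish_near_0[OF iso G]) (rule that)
  have "of_int (z a) *\<^sub>R a \<in> W"
    if H: "finite H" "H \<subseteq> A" "(\<Sum>b\<in>H. of_int (z b) *\<^sub>R b) \<in> U" and "a \<in> H" for H z a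
  proof (cases "a \<in> G")
    case True
    define z' where "z' = (\<lambda>b. if b \<in> H then z b else 0)"
    have "z' \<in> fin_supp A" unfolding z'_def by (rule fin_supp_restrict[OF H(1,2)])
    moreover have "Z_sum_map z' = (\<Sum>b\<in>H. of_int (z b) *\<^sub>R b)"
      unfolding z'_def Z_sum_map_eq_R_sum_map by (subst R_sum_map_eq_sum[OF H(1)]) auto
    ultimately have "z' a = 0" using U(3)[of z' a] H(3) True by simp
    then show ?thesis using \<open>a \<in> H\<close> F(3,4) by (auto simp: z'_def centre_in_weak_ball)
  next
    case False
    then have "\<forall>f\<in>F. f a = 0" using H(2) \<open>a \<in> H\<close> by (auto simp: G_def)
    then show ?thesis using annihilated_multiple_in_weak_ball[OF F(2) _ F(3)] F(4) by blast
  qed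
  then show "\<exists>U. nbhd0 U \<and> (\<forall>H z. finite H \<and> H \<subseteq> A \<and> (\<Sum>a\<in>H. of_int (z a) *\<^sub>R a) \<in> U
      \<longrightarrow> (\<forall>a\<in>H. of_int (z a) *\<^sub>R a \<in> W))"
    using U(1,2) unfolding nbhd0_def by blast
qed

theorem theorem3p8:
  fixes A :: "'a::{real_vector,t2_space} set"
  assumes "tvs_ops_continuous TYPE('a)"
    and "weak_topology_tvs TYPE('a)"
    and "A \<subseteq> UNIV - {0}"
  shows "(top_lin_indep A \<longleftrightarrow> top_indep A) \<and>
         (top_indep A \<longleftrightarrow> abs_cauchy_summable A \<and> minimal_set A) \<and>
         (abs_cauchy_summable A \<and> minimal_set A \<longleftrightarrow> Z_sum_iso A) \<and>
         (Z_sum_iso A \<longleftrightarrow> R_sum_iso A)"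
proof -
  note weak = assms(2)
  have A0: "0 \<notin> A" using assms(3) by blast
  have LI: "top_lin_indep A \<Longrightarrow> top_indep A" by (rule top_lin_indep_imp_top_indep)
  have IC: "top_indep A \<Longrightarrow> cofinitely_annihilated A"
    by (rule top_indep_imp_cofinitely_annihilated[OF weak])
  have IM: "top_indep A \<Longrightarrow> minimal_set A" by (rule top_indep_imp_minimal[OF weak A0])
  have CML: "cofinitely_annihilated A \<Longrightarrow> minimal_set A \<Longrightarrow> top_lin_indep A"
    by (rule cofinitely_annihilated_minimal_imp_top_lin_indep[OF weak])
  have LR: "top_lin_indep A \<Longrightarrow> R_sum_iso A"
    using top_lin_indep_imp_R_sum_iso[OF weak A0] IC LI by blast
  have RZ: "R_sum_iso A \<Longrightarrow> Z_sum_iso A" by (rule R_sum_iso_imp_Z_sum_iso)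
  have ZI: "Z_sum_iso A \<Longrightarrow> top_indep A" by (rule Z_sum_iso_imp_top_indep[OF weak])
  show ?thesis
    using abs_cauchy_summable_imp_cofinitely_annihilated
      cofinitely_annihilated_imp_abs_cauchy_summable[OF weak] LI IC IM CML LR RZ ZI
    by blast
qed

end
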